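(* With $\mathcal{F}$ the infinite rooted tree in which every vertex has $p$ children ($p\ge2$ an integer), for any integral weight functions $a,b$ on $\mathcal{F}$ with nonnegative integer weights $\omega_a,\omega_b$, $$\langle a,b\rangle\ \ge\ \sum_{i=0}^{\infty}p^i\,\widehat\gamma_i(\omega_a)\widehat\gamma_i(\omega_b)\ \ge\ \sum_{i=0}^{\infty}p^i\,\widetilde\gamma_i(\omega_a)\widetilde\gamma_i(\omega_b).$$
   Context: An integral weight function with weight $\omega$ is a map $a:V(\mathcal{F})\to\mathbb{Z}_{\ge0}$ such that every infinite path from the root has $\sum_{v\in T}a(v)\ge\omega$ and $a(v)\ge\sum_{u\text{ child of }v}a(u)$ for every vertex $v$; $\langle a,b\rangle=\sum_v a(v)b(v)$. An integral (resp. real) resolution of $\omega$ is a sequence $(\gamma_i)_{i\ge0}$ with values in $\mathbb{Z}_{\ge0}$ (resp. in $\{0\}\cup[1,\infty)$) such that $\gamma_i\ge p\gamma_{i+1}$ for all $i$ and $\sum_i\gamma_i=\omega$. $\widehat\gamma(\omega)$ (resp. $\widetilde\gamma(\omega)$) denotes the lexicographically smallest integral (resp. real) resolution of $\omega$. *)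

theory Defs
  imports "HOL-Analysis.Analysis"
begin

text \<open>Vertices of the infinite p-ary rooted tree: finite words over {0..<p};
  the root is the empty word, the children of v are v @ [c] for c < p.\<close>
definition tree_vertices :: "nat \<Rightarrow> nat list set" where
  "tree_vertices p = {v. set v \<subseteq> {..<p}}"

text \<open>An infinite path from the root is given by a choice sequence f with f k < p;
  its k-th vertex is map f [0..<k].\<close>
definition integral_weight_function :: "nat \<Rightarrow> nat \<Rightarrow> (nat list \<Rightarrow> nat) \<Rightarrow> bool" where
  "integral_weight_function p \<omega> a \<longleftrightarrow>
     (\<forall>f::nat \<Rightarrow> nat. (\<forall>k. f k < p) \<longrightarrow>
        (\<exists>n. (\<Sum>k<n. a (map f [0..<k])) \<ge> \<omega>)) \<and>
     (\<forall>v\<in>tree_vertices p. a v \<ge> (\<Sum>c<p. a (v @ [c])))"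

definition tree_inner :: "nat \<Rightarrow> (nat list \<Rightarrow> nat) \<Rightarrow> (nat list \<Rightarrow> nat) \<Rightarrow> ennreal" where
  "tree_inner p a b = (\<Sum>\<^sub>\<infinity> v\<in>tree_vertices p. of_nat (a v * b v))"

definition integral_resolution :: "nat \<Rightarrow> nat \<Rightarrow> (nat \<Rightarrow> nat) \<Rightarrow> bool" where
  "integral_resolution p \<omega> \<gamma> \<longleftrightarrow>
     (\<forall>i. \<gamma> i \<ge> p * \<gamma> (Suc i)) \<and> (\<lambda>i. real (\<gamma> i)) sums real \<omega>"

definition real_resolution :: "nat \<Rightarrow> nat \<Rightarrow> (nat \<Rightarrow> real) \<Rightarrow> bool" where
  "real_resolution p \<omega> \<gamma> \<longleftrightarrow>
     (\<forall>i. \<gamma> i = 0 \<or> \<gamma> i \<ge> 1) \<and> (\<forall>i. \<gamma> i \<ge> real p * \<gamma> (Suc i)) \<and> \<gamma> sums real \<omega>"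

definition lex_le :: "(nat \<Rightarrow> 'a::linorder) \<Rightarrow> (nat \<Rightarrow> 'a) \<Rightarrow> bool" where
  "lex_le x y \<longleftrightarrow> x = y \<or> (\<exists>i. (\<forall>j<i. x j = y j) \<and> x i < y i)"

definition gamma_hat :: "nat \<Rightarrow> nat \<Rightarrow> nat \<Rightarrow> nat" where
  "gamma_hat p \<omega> = (THE \<gamma>. integral_resolution p \<omega> \<gamma> \<and>
      (\<forall>\<delta>. integral_resolution p \<omega> \<delta> \<longrightarrow> lex_le \<gamma> \<delta>))"

definition gamma_tilde :: "nat \<Rightarrow> nat \<Rightarrow> nat \<Rightarrow> real" where
  "gamma_tilde p \<omega> = (THE \<gamma>. real_resolution p \<omega> \<gamma> \<and>
      (\<forall>\<delta>. real_resolution p \<omega> \<delta> \<longrightarrow> lex_le \<gamma> \<delta>))"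

end

theory Submission
  imports Defs
begin

text \<open>
  An integral resolution with first term \<open>x\<close> has total at most
  \<open>x + x div p + x div p\<^sup>2 + \<dots>\<close>, so the lexicographically least resolution of \<open>\<omega>\<close> starts with
  the least \<open>x\<close> for which this bound reaches \<open>\<omega>\<close> and continues greedily with \<open>\<omega> - x\<close>.
  Writing \<open>F(u, v) = \<Sum> p\<^sup>i \<gamma>\<^sub>i(u) \<gamma>\<^sub>i(v)\<close> for the greedy resolutions, \<open>F\<close> grows in each argument
  with increments bounded by the first term belonging to the other one; this yields
  \<open>F(u, v) \<le> r s + p F(u - r, v - s)\<close> for all \<open>r, s\<close> at least the first terms.
  Since the subtrees below the root carry weight functions of weights \<open>\<omega> - a(root)\<close>, and the
  root values are at least those first terms (follow a path of light children from the root),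
  induction gives \<open>F(\<omega>\<^sub>a, \<omega>\<^sub>b) \<le> \<langle>a, b\<rangle>\<close>.

  The lexicographically least real resolution is geometric,
  \<open>x p\<^sup>-\<^sup>i\<close> for \<open>i \<le> k\<close>, with \<open>k\<close> maximal such that the last term is still \<open>\<ge> 1\<close>.
  For an arbitrary real resolution \<open>c\<close> the sequence \<open>p\<^sup>i c\<^sub>i\<close> is nonincreasing, so the prefix
  sums of \<open>c\<close> dominate those of the geometric one, and Chebyshev's sum inequality with weights
  \<open>p\<^sup>-\<^sup>i\<close> bounds \<open>\<Sum> p\<^sup>i c\<^sub>i d\<^sub>i\<close> from below by the geometric value.
\<close>

lemma lex_le_antisym:
  fixes x y :: "nat \<Rightarrow> 'a::linorder"
  assumes "lex_le x y" "lex_le y x"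
  shows "x = y"
proof (rule ccontr)
  assume ne: "x \<noteq> y"
  obtain i where i: "\<forall>j<i. x j = y j" "x i < y i"
    using assms(1) ne unfolding lex_le_def by blast
  obtain k where k: "\<forall>j<k. y j = x j" "y k < x k"
    using assms(2) ne unfolding lex_le_def by blast
  show False
    by (cases i k rule: linorder_cases) (use i k in force)+
qed

lemma lex_le_shift:
  fixes x y :: "nat \<Rightarrow> 'a::linorder"
  assumes "x 0 = y 0" "lex_le (\<lambda>i. x (Suc i)) (\<lambda>i. y (Suc i))"
  shows "lex_le x y"
proof (cases "(\<lambda>i. x (Suc i)) = (\<lambda>i. y (Suc i))")
  case True
  have "x i = y i" for i using assms(1) True by (cases i) (auto dest: fun_cong)
  then show ?thesis by (simp add: lex_le_def fun_eq_iff)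
next
  case False
  then obtain i where i: "\<forall>j<i. x (Suc j) = y (Suc j)" "x (Suc i) < y (Suc i)"
    using assms(2) unfolding lex_le_def by auto
  then have "\<forall>j<Suc i. x j = y j" using assms(1) by (auto simp: less_Suc_eq_0_disj)
  then show ?thesis unfolding lex_le_def using i(2) by blast
qed

section \<open>Integral resolutions\<close>

definition div_power_sum :: "nat \<Rightarrow> nat \<Rightarrow> nat" where
  "div_power_sum p x = (\<Sum>k\<le>x. x div p ^ k)"

definition resolution_head :: "nat \<Rightarrow> nat \<Rightarrow> nat" where
  "resolution_head p w = (LEAST x. w \<le> div_power_sum p x)"

lemma le_div_power_sum: "x \<le> div_power_sum p x"
  using member_le_sum[of 0 "{..x}" "\<lambda>k. x div p ^ k"] by (simp add: div_power_sum_def)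

lemma div_power_sum_0 [simp]: "div_power_sum p 0 = 0"
  by (simp add: div_power_sum_def)

lemma div_power_sum_mono: "x \<le> y \<Longrightarrow> div_power_sum p x \<le> div_power_sum p y"
  unfolding div_power_sum_def
  by (rule order.trans[OF sum_mono[OF div_le_mono] sum_mono2]) auto

lemma le_div_power_sum_resolution_head: "w \<le> div_power_sum p (resolution_head p w)"
  unfolding resolution_head_def by (rule LeastI[of _ w]) (rule le_div_power_sum)

lemma resolution_head_le: "w \<le> div_power_sum p x \<Longrightarrow> resolution_head p w \<le> x"
  unfolding resolution_head_def by (rule Least_le)

lemma resolution_head_le_self: "resolution_head p w \<le> w"
  by (rule resolution_head_le[OF le_div_power_sum])

lemma resolution_head_0 [simp]: "resolution_head p 0 = 0"
  using resolution_head_le[of 0 p 0] by simp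

lemma resolution_head_pos: "0 < w \<Longrightarrow> 0 < resolution_head p w"
  using le_div_power_sum_resolution_head[of w p] by (cases "resolution_head p w") auto

lemma resolution_head_mono: "u \<le> w \<Longrightarrow> resolution_head p u \<le> resolution_head p w"
  using le_div_power_sum_resolution_head[of w p] by (intro resolution_head_le) simp

context
  fixes p :: nat
  assumes p: "p \<ge> 2"
begin

lemma div_power_eq_0: "y < k \<Longrightarrow> y div p ^ k = 0"
proof -
  assume "y < k"
  have "k < 2 ^ k" by (rule less_exp)
  also have "\<dots> \<le> p ^ k" using p by (simp add: power_mono)
  finally show ?thesis using \<open>y < k\<close> by simp
qed

lemma div_power_sum_atMost: "y \<le> N \<Longrightarrow> (\<Sum>k\<le>N. y div p ^ k) = div_power_sum p y"
  unfolding div_power_sum_def by (rule sum.mono_neutral_right) (auto simp: div_power_eq_0)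

lemma div_power_sum_rec: "div_power_sum p x = x + div_power_sum p (x div p)"
proof (cases x)
  case (Suc m)
  have "div_power_sum p x = (\<Sum>k\<le>Suc m. x div p ^ k)"
    using Suc by (simp add: div_power_sum_def)
  also have "\<dots> = x + (\<Sum>k\<le>m. x div p div p ^ k)"
    by (subst sum.atMost_Suc_shift) (simp add: div_mult2_eq)
  also have "(\<Sum>k\<le>m. x div p div p ^ k) = div_power_sum p (x div p)"
  proof (rule div_power_sum_atMost)
    have "Suc m div p \<le> Suc m div 2" using p by (intro div_le_mono2) auto
    also have "\<dots> \<le> m" by presburger
    finally show "x div p \<le> m" using Suc by simp
  qed
  finally show ?thesis .
qed simp

lemma Suc_div_power_sum_le: "Suc (div_power_sum p x) \<le> div_power_sum p (Suc x)"
  using div_power_sum_rec[of "Suc x"] div_power_sum_rec[of x]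
    div_power_sum_mono[of "x div p" "Suc x div p" p]
  by (simp add: div_le_mono)

lemma resolution_head_Suc_le: "resolution_head p (Suc w) \<le> Suc (resolution_head p w)"
  using le_div_power_sum_resolution_head[of w p] Suc_div_power_sum_le[of "resolution_head p w"]
  by (intro resolution_head_le) simp

text \<open>After a first term \<open>s\<close> that is admissible for \<open>w\<close>, the greedy continuation respects the decay
  condition.\<close>
lemma mult_resolution_head_diff_le:
  assumes "resolution_head p w \<le> s"
  shows "p * resolution_head p (w - s) \<le> s"
proof -
  have "w \<le> div_power_sum p s"
    using le_div_power_sum_resolution_head[of w p] div_power_sum_mono[OF assms, of p] by simp
  then have "w - s \<le> div_power_sum p (s div p)" using div_power_sum_rec[of s] by simp
  then have "resolution_head p (w - s) \<le> s div p" by (rule resolution_head_le)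
  then show ?thesis
    by (metis dual_order.trans mult.commute mult_le_mono1 div_times_less_eq_dividend)
qed

end

fun greedy_resolution :: "nat \<Rightarrow> nat \<Rightarrow> nat \<Rightarrow> nat" where
  "greedy_resolution p w 0 = resolution_head p w"
| "greedy_resolution p w (Suc i) = greedy_resolution p (w - resolution_head p w) i"

function resolution_pairing :: "nat \<Rightarrow> nat \<Rightarrow> nat \<Rightarrow> nat" where
  "resolution_pairing p u v =
     (if u = 0 \<or> v = 0 then 0
      else resolution_head p u * resolution_head p v
        + p * resolution_pairing p (u - resolution_head p u) (v - resolution_head p v))"
  by auto
termination
  by (relation "Wellfounded.measure (\<lambda>(p, u, v). u)") (auto simp: resolution_head_pos)

declare resolution_pairing.simps [simp del]

lemma resolution_pairing_0 [simp]: "resolution_pairing p 0 v = 0" "resolution_pairing p u 0 = 0"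
  by (simp_all add: resolution_pairing.simps)

lemma resolution_pairing_unfold:
  "resolution_pairing p u v = resolution_head p u * resolution_head p v
     + p * resolution_pairing p (u - resolution_head p u) (v - resolution_head p v)"
  by (cases "u = 0 \<or> v = 0") (auto simp: resolution_pairing.simps[of p u v])

lemma resolution_pairing_commute: "resolution_pairing p u v = resolution_pairing p v u"
proof (induction p u v rule: resolution_pairing.induct)
  case (1 p u v)
  then show ?case
    by (cases "u = 0 \<or> v = 0")
      (auto simp: resolution_pairing.simps[of p u v] resolution_pairing.simps[of p v u])
qed

lemma greedy_resolution_eq_0: "w \<le> i \<Longrightarrow> greedy_resolution p w i = 0"
proof (induction i arbitrary: w)
  case (Suc i)
  then show ?case
    using resolution_head_pos[of w p] by (cases "w = 0") (auto intro: Suc.IH)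
qed simp

lemma sum_greedy_resolution: "w \<le> n \<Longrightarrow> (\<Sum>i<n. greedy_resolution p w i) = w"
proof (induction n arbitrary: w)
  case (Suc n)
  have "w - resolution_head p w \<le> n"
    using Suc.prems resolution_head_pos[of w p] by (cases "w = 0") auto
  then show ?case
    using Suc.IH resolution_head_le_self[of p w]
    by (simp add: sum.lessThan_Suc_shift del: sum.lessThan_Suc)
qed simp

lemma sums_greedy_resolution: "(\<lambda>i. real (greedy_resolution p w i)) sums real w"
proof -
  have "(\<lambda>i. real (greedy_resolution p w i)) sums (\<Sum>i<w. real (greedy_resolution p w i))"
    by (rule sums_finite) (auto simp: greedy_resolution_eq_0)
  then show ?thesis using sum_greedy_resolution[of w w p] by (simp flip: of_nat_sum)
qed

lemma sum_resolution_pairing: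
  "u \<le> n \<Longrightarrow> (\<Sum>i<n. p ^ i * greedy_resolution p u i * greedy_resolution p v i)
     = resolution_pairing p u v"
proof (induction n arbitrary: u v)
  case (Suc n)
  let ?u = "u - resolution_head p u" and ?v = "v - resolution_head p v"
  have "?u \<le> n"
    using Suc.prems resolution_head_pos[of u p] by (cases "u = 0") auto
  have "(\<Sum>i<Suc n. p ^ i * greedy_resolution p u i * greedy_resolution p v i)
      = resolution_head p u * resolution_head p v
        + p * (\<Sum>i<n. p ^ i * greedy_resolution p ?u i * greedy_resolution p ?v i)"
    by (subst sum.lessThan_Suc_shift) (simp add: sum_distrib_left mult.assoc)
  also have "\<dots> = resolution_pairing p u v"
    using Suc.IH[OF \<open>?u \<le> n\<close>] resolution_pairing_unfold[of p u v] by simp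
  finally show ?case .
qed simp

lemma suminf_resolution_pairing:
  "(\<Sum>i. real p ^ i * real (greedy_resolution p u i) * real (greedy_resolution p v i))
     = real (resolution_pairing p u v)"
proof -
  have "(\<Sum>i. real p ^ i * real (greedy_resolution p u i) * real (greedy_resolution p v i))
      = (\<Sum>i<u. real p ^ i * real (greedy_resolution p u i) * real (greedy_resolution p v i))"
    by (rule suminf_finite) (auto simp: greedy_resolution_eq_0)
  also have "\<dots> = real (\<Sum>i<u. p ^ i * greedy_resolution p u i * greedy_resolution p v i)"
    by (simp add: of_nat_sum)
  finally show ?thesis using sum_resolution_pairing[of u u p v] by simp
qed

context
  fixes p :: nat
  assumes p: "p \<ge> 2"
begin

text \<open>If the first term of \<open>u\<close> does not change, the increment passes to the tails, where it is
  scaled by \<open>p\<close> but bounded by the first term of the tail of \<open>v\<close>, at most \<open>resolution_head p v / p\<close>.\<close>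
lemma resolution_pairing_Suc_bounds:
  "resolution_pairing p u v \<le> resolution_pairing p (Suc u) v \<and>
   resolution_pairing p (Suc u) v \<le> resolution_pairing p u v + resolution_head p v"
proof (induction u arbitrary: v rule: less_induct)
  case (less u)
  define v' where "v' = v - resolution_head p v"
  show ?case
  proof (cases "resolution_head p (Suc u) = resolution_head p u")
    case True
    have "u > 0" using True resolution_head_pos[of "Suc u" p] by (cases u) auto
    then have lt: "u - resolution_head p u < u" using resolution_head_pos[of u p] by simp
    have eq: "Suc u - resolution_head p u = Suc (u - resolution_head p u)"
      using resolution_head_le_self[of p u] by simp
    note IH = less.IH[OF lt, of v']
    have "p * resolution_head p v' \<le> resolution_head p v"
      unfolding v'_def by (rule mult_resolution_head_diff_le[OF p]) simp
    moreover have "p * resolution_pairing p (Suc (u - resolution_head p u)) v'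
        \<le> p * resolution_pairing p (u - resolution_head p u) v' + p * resolution_head p v'"
      using IH by (metis add_mult_distrib2 mult_le_mono2)
    ultimately show ?thesis
      using IH resolution_pairing_unfold[of p "Suc u" v] resolution_pairing_unfold[of p u v]
      by (simp add: True eq v'_def)
  next
    case False
    then have "resolution_head p (Suc u) = Suc (resolution_head p u)"
      using resolution_head_Suc_le[OF p, of u] resolution_head_mono[of u "Suc u" p] by simp
    then show ?thesis
      using resolution_pairing_unfold[of p "Suc u" v] resolution_pairing_unfold[of p u v] by simp
  qed
qed

lemma resolution_pairing_add_bounds:
  "resolution_pairing p u v \<le> resolution_pairing p (u + t) v \<and>
   resolution_pairing p (u + t) v \<le> resolution_pairing p u v + t * resolution_head p v"
proof (induction t)
  case (Suc t)
  then show ?case using resolution_pairing_Suc_bounds[of "u + t" v] by auto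
qed simp

lemma resolution_pairing_mono: "u \<le> u' \<Longrightarrow> resolution_pairing p u v \<le> resolution_pairing p u' v"
  using resolution_pairing_add_bounds[of u v "u' - u"] by simp

lemma resolution_pairing_le_diff:
  assumes "u \<le> u' + t"
  shows "resolution_pairing p u v \<le> resolution_pairing p u' v + t * resolution_head p v"
  using resolution_pairing_mono[OF assms, of v] resolution_pairing_add_bounds[of u' v t] by simp

text \<open>The recursion step of the first inequality: the root values may exceed the first terms.\<close>
lemma resolution_pairing_le_split:
  assumes "resolution_head p u \<le> r" "resolution_head p v \<le> s"
  shows "resolution_pairing p u v \<le> r * s + p * resolution_pairing p (u - r) (v - s)"
proof -
  define a b x y where "a = resolution_head p u" "b = resolution_head p v" "x = r - a" "y = s - b"
  have r: "r = a + x" and s: "s = b + y" using assms a_b_x_y_def by auto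
  have "resolution_pairing p (u - a) (v - b)
      \<le> resolution_pairing p (u - r) (v - b) + x * resolution_head p (v - b)"
    by (rule resolution_pairing_le_diff) (simp add: r)
  moreover have "resolution_pairing p (u - r) (v - b)
      \<le> resolution_pairing p (u - r) (v - s) + y * resolution_head p (u - r)"
    using resolution_pairing_le_diff[of "v - b" "v - s" y "u - r"]
    by (simp add: s resolution_pairing_commute[of p "u - r"])
  ultimately have "resolution_pairing p (u - a) (v - b)
      \<le> resolution_pairing p (u - r) (v - s) + x * resolution_head p (v - b) + y * resolution_head p (u - r)"
    by linarith
  from mult_le_mono2[OF this, of p]
  have "p * resolution_pairing p (u - a) (v - b)
      \<le> p * resolution_pairing p (u - r) (v - s)
        + x * (p * resolution_head p (v - b)) + y * (p * resolution_head p (u - r))"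
    by (simp add: algebra_simps)
  also have "\<dots> \<le> p * resolution_pairing p (u - r) (v - s) + x * b + y * r"
  proof (intro add_mono mult_le_mono2 order.refl)
    show "p * resolution_head p (v - b) \<le> b"
      unfolding a_b_x_y_def by (rule mult_resolution_head_diff_le[OF p]) simp
    show "p * resolution_head p (u - r) \<le> r"
      using assms(1) by (rule mult_resolution_head_diff_le[OF p])
  qed
  finally show ?thesis
    using resolution_pairing_unfold[of p u v] by (simp add: a_b_x_y_def[symmetric] r s algebra_simps)
qed

lemma integral_resolution_le_div_power:
  "integral_resolution p w \<delta> \<Longrightarrow> \<delta> i \<le> \<delta> 0 div p ^ i"
proof (induction i)
  case (Suc i)
  have "p * \<delta> (Suc i) \<le> \<delta> i" using Suc.prems unfolding integral_resolution_def by auto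
  then have "\<delta> (Suc i) \<le> \<delta> i div p"
    using p by (simp add: less_eq_div_iff_mult_less_eq mult.commute)
  also have "\<dots> \<le> \<delta> 0 div p ^ i div p" using Suc by (simp add: div_le_mono)
  also have "\<dots> = \<delta> 0 div p ^ Suc i" by (metis div_mult2_eq power_Suc2)
  finally show ?case .
qed simp

lemma integral_resolution_sum_atMost:
  assumes "integral_resolution p w \<delta>"
  shows "w = (\<Sum>i\<le>\<delta> 0. \<delta> i)"
proof -
  have "\<delta> i = 0" if "i \<notin> {..\<delta> 0}" for i
    using integral_resolution_le_div_power[OF assms, of i] div_power_eq_0[OF p, of "\<delta> 0" i] that by simp
  then have "(\<lambda>i. real (\<delta> i)) sums (\<Sum>i\<le>\<delta> 0. real (\<delta> i))"
    by (intro sums_finite) auto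
  moreover have "(\<lambda>i. real (\<delta> i)) sums real w"
    using assms unfolding integral_resolution_def by auto
  ultimately have "real w = (\<Sum>i\<le>\<delta> 0. real (\<delta> i))" using sums_unique2 by blast
  then show ?thesis by (simp flip: of_nat_sum)
qed

lemma resolution_head_le_integral_resolution:
  assumes "integral_resolution p w \<delta>"
  shows "resolution_head p w \<le> \<delta> 0"
proof (rule resolution_head_le)
  have "w = (\<Sum>i\<le>\<delta> 0. \<delta> i)" by (rule integral_resolution_sum_atMost[OF assms])
  also have "\<dots> \<le> (\<Sum>i\<le>\<delta> 0. \<delta> 0 div p ^ i)"
    by (intro sum_mono integral_resolution_le_div_power[OF assms])
  finally show "w \<le> div_power_sum p (\<delta> 0)" by (simp add: div_power_sum_def)
qed

lemma integral_resolution_tail: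
  assumes "integral_resolution p w \<delta>"
  shows "integral_resolution p (w - \<delta> 0) (\<lambda>i. \<delta> (Suc i))"
proof -
  have "\<delta> 0 \<le> w"
    using member_le_sum[of 0 "{..\<delta> 0}" \<delta>] integral_resolution_sum_atMost[OF assms] by simp
  then have "(\<lambda>i. real (\<delta> i)) sums (real (w - \<delta> 0) + real (\<delta> 0))"
    using assms unfolding integral_resolution_def by simp
  then have "(\<lambda>i. real (\<delta> (Suc i))) sums real (w - \<delta> 0)"
    by (subst sums_Suc_iff) simp
  then show ?thesis using assms unfolding integral_resolution_def by auto
qed

lemma integral_resolution_greedy: "integral_resolution p w (greedy_resolution p w)"
proof -
  have "p * greedy_resolution p w (Suc i) \<le> greedy_resolution p w i" for i
  proof (induction i arbitrary: w)
    case 0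
    show ?case using mult_resolution_head_diff_le[OF p, of w "resolution_head p w"] by simp
  next
    case (Suc i)
    show ?case using Suc.IH[of "w - resolution_head p w"] by (simp only: greedy_resolution.simps)
  qed
  then show ?thesis unfolding integral_resolution_def using sums_greedy_resolution by auto
qed

lemma lex_le_greedy_resolution:
  "integral_resolution p w \<delta> \<Longrightarrow> lex_le (greedy_resolution p w) \<delta>"
proof (induction w arbitrary: \<delta> rule: less_induct)
  case (less w)
  have head: "resolution_head p w \<le> \<delta> 0"
    by (rule resolution_head_le_integral_resolution[OF less.prems])
  show ?case
  proof (cases "resolution_head p w < \<delta> 0")
    case True
    then show ?thesis unfolding lex_le_def by (intro disjI2 exI[of _ 0]) simp
  next
    case False
    with head have eq: "\<delta> 0 = resolution_head p w" by simp
    show ?thesis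
    proof (cases "w = 0")
      case True
      then have "\<delta> = greedy_resolution p w"
        using integral_resolution_le_div_power[OF less.prems] eq
        by (auto intro!: ext simp: greedy_resolution_eq_0)
      then show ?thesis by (simp add: lex_le_def)
    next
      case False
      then have "w - resolution_head p w < w" using resolution_head_pos[of w p] by simp
      moreover have "integral_resolution p (w - resolution_head p w) (\<lambda>i. \<delta> (Suc i))"
        using integral_resolution_tail[OF less.prems] eq by simp
      ultimately have "lex_le (\<lambda>i. greedy_resolution p w (Suc i)) (\<lambda>i. \<delta> (Suc i))"
        by (simp add: less.IH)
      with eq show ?thesis by (intro lex_le_shift[of "greedy_resolution p w" \<delta>]) simp_all
    qed
  qed
qed

lemma gamma_hat_eq_greedy_resolution: "gamma_hat p w = greedy_resolution p w"
  unfolding gamma_hat_def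
proof (rule the_equality)
  fix \<gamma>
  assume \<gamma>: "integral_resolution p w \<gamma> \<and> (\<forall>\<delta>. integral_resolution p w \<delta> \<longrightarrow> lex_le \<gamma> \<delta>)"
  show "\<gamma> = greedy_resolution p w"
  proof (rule lex_le_antisym)
    show "lex_le \<gamma> (greedy_resolution p w)" using \<gamma> integral_resolution_greedy by blast
    show "lex_le (greedy_resolution p w) \<gamma>" using \<gamma> by (intro lex_le_greedy_resolution) blast
  qed
qed (simp add: integral_resolution_greedy lex_le_greedy_resolution)

end

section \<open>Weight functions on the tree\<close>

lemma Cons_in_tree_vertices [simp]: "c # v \<in> tree_vertices p \<longleftrightarrow> c < p \<and> v \<in> tree_vertices p"
  by (auto simp: tree_vertices_def)

lemma Nil_in_tree_vertices [simp]: "[] \<in> tree_vertices p"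
  by (auto simp: tree_vertices_def)

lemma snoc_in_tree_vertices: "v \<in> tree_vertices p \<Longrightarrow> c < p \<Longrightarrow> v @ [c] \<in> tree_vertices p"
  by (auto simp: tree_vertices_def)

lemma tree_vertices_unfold: "tree_vertices p = insert [] (\<Union>c<p. (#) c ` tree_vertices p)"
proof (rule set_eqI)
  fix v show "v \<in> tree_vertices p \<longleftrightarrow> v \<in> insert [] (\<Union>c<p. (#) c ` tree_vertices p)"
    by (cases v) auto
qed

lemma infsum_UN_Cons:
  fixes g :: "'a list \<Rightarrow> ennreal"
  assumes "finite C"
  shows "infsum g (\<Union>c\<in>C. (#) c ` T) = (\<Sum>c\<in>C. infsum (\<lambda>v. g (c # v)) T)"
  using assms
proof (induction C rule: finite_induct)
  case (insert c C)
  have "infsum g (\<Union>c'\<in>insert c C. (#) c' ` T) = infsum g ((#) c ` T) + infsum g (\<Union>c\<in>C. (#) c ` T)"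
    using insert.hyps(2) by (subst UN_insert, intro infsum_Un_disjoint) (auto intro: nonneg_summable_on_complete)
  also have "infsum g ((#) c ` T) = infsum (\<lambda>v. g (c # v)) T"
    by (subst infsum_reindex) (auto simp: comp_def)
  finally show ?case using insert by simp
qed simp

lemma tree_inner_unfold:
  "tree_inner p a b = of_nat (a [] * b []) + (\<Sum>c<p. tree_inner p (\<lambda>v. a (c # v)) (\<lambda>v. b (c # v)))"
proof -
  have "tree_inner p a b
      = of_nat (a [] * b []) + (\<Sum>\<^sub>\<infinity>v\<in>(\<Union>c<p. (#) c ` tree_vertices p). of_nat (a v * b v))"
    unfolding tree_inner_def
    by (subst tree_vertices_unfold, rule infsum_insert) (auto intro: nonneg_summable_on_complete)
  also have "(\<Sum>\<^sub>\<infinity>v\<in>(\<Union>c<p. (#) c ` tree_vertices p). (of_nat (a v * b v) :: ennreal))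
     = (\<Sum>c<p. tree_inner p (\<lambda>v. a (c # v)) (\<lambda>v. b (c # v)))"
    unfolding tree_inner_def by (rule infsum_UN_Cons) simp
  finally show ?thesis .
qed

lemma integral_weight_function_subtree:
  assumes w: "integral_weight_function p \<omega> a" and c: "c < p"
  shows "integral_weight_function p (\<omega> - a []) (\<lambda>v. a (c # v))"
  unfolding integral_weight_function_def
proof (intro conjI allI impI ballI)
  fix f :: "nat \<Rightarrow> nat"
  assume f: "\<forall>k. f k < p"
  define f' where "f' = case_nat c f"
  have "\<forall>k. f' k < p" using f c by (auto simp: f'_def split: nat.split)
  then obtain n where n: "\<omega> \<le> (\<Sum>k<n. a (map f' [0..<k]))"
    using w unfolding integral_weight_function_def by blast
  have map_f': "map f' [0..<Suc k] = c # map f [0..<k]" for k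
    by (induction k) (auto simp: f'_def)
  show "\<exists>n. \<omega> - a [] \<le> (\<Sum>k<n. a (c # map f [0..<k]))"
  proof (cases n)
    case (Suc m)
    have "(\<Sum>k<n. a (map f' [0..<k])) = a [] + (\<Sum>k<m. a (c # map f [0..<k]))"
      unfolding Suc by (subst sum.lessThan_Suc_shift) (simp add: map_f' del: upt_Suc)
    then show ?thesis using n by (intro exI[of _ m]) simp
  qed (use n in auto)
next
  fix v
  assume "v \<in> tree_vertices p"
  then have "c # v \<in> tree_vertices p" using c by simp
  then have "(\<Sum>c'<p. a ((c # v) @ [c'])) \<le> a (c # v)"
    using w unfolding integral_weight_function_def by blast
  then show "(\<Sum>c'<p. a (c # v @ [c'])) \<le> a (c # v)" by simp
qed

context
  fixes p :: nat
  assumes p: "p \<ge> 2"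
begin

lemma integral_weight_function_light_child:
  assumes w: "integral_weight_function p \<omega> a" and v: "v \<in> tree_vertices p"
  shows "\<exists>c<p. p * a (v @ [c]) \<le> a v"
proof (rule ccontr)
  assume "\<not> ?thesis"
  then have "(\<Sum>c<p. a v) < (\<Sum>c<p. p * a (v @ [c]))"
    using p by (intro sum_strict_mono) (auto simp: lessThan_empty_iff)
  also have "\<dots> = p * (\<Sum>c<p. a (v @ [c]))" by (simp add: sum_distrib_left)
  also have "\<dots> \<le> p * a v"
    using w v unfolding integral_weight_function_def by simp
  finally show False by simp
qed

text \<open>Along the path that always moves to a child carrying at most \<open>1/p\<close> of the weight, the \<open>k\<close>-th
  weight is at most \<open>a [] div p\<^sup>k\<close>.\<close>
lemma le_div_power_sum_root:
  assumes w: "integral_weight_function p \<omega> a"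
  shows "\<omega> \<le> div_power_sum p (a [])"
proof -
  define child where "child v = (SOME c. c < p \<and> p * a (v @ [c]) \<le> a v)" for v
  have child: "child v < p \<and> p * a (v @ [child v]) \<le> a v" if "v \<in> tree_vertices p" for v
    unfolding child_def
    using someI_ex[OF integral_weight_function_light_child[OF w that]] by simp
  define path where "path k = ((\<lambda>v. v @ [child v]) ^^ k) []" for k
  define f where "f k = child (path k)" for k
  have path: "path k \<in> tree_vertices p \<and> map f [0..<k] = path k \<and> a (path k) \<le> a [] div p ^ k" for k
  proof (induction k)
    case (Suc k)
    then have c: "child (path k) < p" "p * a (path k @ [child (path k)]) \<le> a (path k)"
      using child by auto
    have path_Suc: "path (Suc k) = path k @ [child (path k)]" by (simp add: path_def)
    have "a (path (Suc k)) \<le> a (path k) div p"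
      using c(2) p path_Suc by (simp add: less_eq_div_iff_mult_less_eq mult.commute)
    also have "\<dots> \<le> a [] div p ^ k div p" using Suc by (simp add: div_le_mono)
    also have "\<dots> = a [] div p ^ Suc k" by (metis div_mult2_eq power_Suc2)
    finally show ?case using Suc c path_Suc by (auto simp: f_def snoc_in_tree_vertices)
  qed (simp add: path_def)
  have "\<forall>k. f k < p" using path child by (simp add: f_def)
  then obtain n where "\<omega> \<le> (\<Sum>k<n. a (map f [0..<k]))"
    using w unfolding integral_weight_function_def by blast
  also have "\<dots> \<le> (\<Sum>k<n. a [] div p ^ k)" using path by (intro sum_mono) auto
  also have "\<dots> \<le> (\<Sum>k\<le>max n (a []). a [] div p ^ k)" by (intro sum_mono2) auto
  also have "\<dots> = div_power_sum p (a [])" by (rule div_power_sum_atMost[OF p]) simp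
  finally show ?thesis .
qed

theorem resolution_pairing_le_tree_inner:
  assumes "integral_weight_function p \<omega>\<^sub>a a" "integral_weight_function p \<omega>\<^sub>b b"
  shows "of_nat (resolution_pairing p \<omega>\<^sub>a \<omega>\<^sub>b) \<le> tree_inner p a b"
  using assms
proof (induction \<omega>\<^sub>a arbitrary: \<omega>\<^sub>b a b rule: less_induct)
  case (less \<omega>\<^sub>a)
  show ?case
  proof (cases "\<omega>\<^sub>a = 0 \<or> \<omega>\<^sub>b = 0")
    case False
    have ha: "resolution_head p \<omega>\<^sub>a \<le> a []"
      by (rule resolution_head_le, rule le_div_power_sum_root[OF less.prems(1)])
    have hb: "resolution_head p \<omega>\<^sub>b \<le> b []"
      by (rule resolution_head_le, rule le_div_power_sum_root[OF less.prems(2)])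
    have "\<omega>\<^sub>a - a [] < \<omega>\<^sub>a" using False ha resolution_head_pos[of \<omega>\<^sub>a p] by simp
    from less.IH[OF this integral_weight_function_subtree[OF less.prems(1)]
        integral_weight_function_subtree[OF less.prems(2)]]
    have IH: "c < p \<Longrightarrow> of_nat (resolution_pairing p (\<omega>\<^sub>a - a []) (\<omega>\<^sub>b - b []))
        \<le> tree_inner p (\<lambda>v. a (c # v)) (\<lambda>v. b (c # v))" for c .
    have "(of_nat (resolution_pairing p \<omega>\<^sub>a \<omega>\<^sub>b) :: ennreal)
        \<le> of_nat (a [] * b [] + p * resolution_pairing p (\<omega>\<^sub>a - a []) (\<omega>\<^sub>b - b []))"
      using resolution_pairing_le_split[OF p ha hb] by (rule of_nat_mono)
    also have "\<dots> = of_nat (a [] * b [])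
        + (\<Sum>c<p. of_nat (resolution_pairing p (\<omega>\<^sub>a - a []) (\<omega>\<^sub>b - b [])))"
      by simp
    also have "\<dots> \<le> of_nat (a [] * b []) + (\<Sum>c<p. tree_inner p (\<lambda>v. a (c # v)) (\<lambda>v. b (c # v)))"
      by (intro add_mono sum_mono IH) auto
    also have "\<dots> = tree_inner p a b" by (rule tree_inner_unfold[symmetric])
    finally show ?thesis .
  qed auto
qed

end

section \<open>Real resolutions\<close>

lemma integral_resolution_real_resolution:
  "integral_resolution p w \<gamma> \<Longrightarrow> real_resolution p w (\<lambda>i. real (\<gamma> i))"
  unfolding integral_resolution_def real_resolution_def by (auto simp flip: of_nat_mult)

lemma real_resolution_nonneg: "real_resolution p w \<delta> \<Longrightarrow> 0 \<le> \<delta> i"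
  unfolding real_resolution_def by (metis order.trans zero_le_one order.refl)

lemma real_resolution_scaled_antimono:
  assumes "real_resolution p w \<delta>" "i \<le> j"
  shows "real p ^ j * \<delta> j \<le> real p ^ i * \<delta> i"
  using assms(2)
proof (induction rule: dec_induct)
  case (step j)
  have "real p * \<delta> (Suc j) \<le> \<delta> j" using assms(1) unfolding real_resolution_def by auto
  from mult_left_mono[OF this, of "real p ^ j"]
  have "real p ^ Suc j * \<delta> (Suc j) \<le> real p ^ j * \<delta> j" by (simp add: algebra_simps)
  then show ?case using step.IH by linarith
qed simp

lemma Chebyshev_sum_weighted:
  fixes u v w :: "nat \<Rightarrow> real"
  assumes u: "\<And>i j. i \<le> j \<Longrightarrow> j \<le> m \<Longrightarrow> u j \<le> u i"
    and v: "\<And>i j. i \<le> j \<Longrightarrow> j \<le> m \<Longrightarrow> v j \<le> v i"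
    and w: "\<And>i. 0 \<le> w i"
  shows "(\<Sum>i\<le>m. w i * u i) * (\<Sum>i\<le>m. w i * v i) \<le> (\<Sum>i\<le>m. w i) * (\<Sum>i\<le>m. w i * u i * v i)"
proof -
  let ?W = "\<Sum>i\<le>m. w i" and ?U = "\<Sum>i\<le>m. w i * u i" and ?V = "\<Sum>i\<le>m. w i * v i"
    and ?UV = "\<Sum>i\<le>m. w i * u i * v i"
  have "0 \<le> w i * w j * ((u i - u j) * (v i - v j))" if "i \<le> m" "j \<le> m" for i j
  proof -
    have "0 \<le> (u i - u j) * (v i - v j)"
      using u[of i j] v[of i j] u[of j i] v[of j i] that
      by (cases "i \<le> j") (auto intro: mult_nonneg_nonneg mult_nonpos_nonpos)
    then show ?thesis using w[of i] w[of j] by simp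
  qed
  then have "0 \<le> (\<Sum>i\<le>m. \<Sum>j\<le>m. w i * w j * ((u i - u j) * (v i - v j)))"
    by (intro sum_nonneg) auto
  also have "\<dots> = ?UV * ?W + ?W * ?UV - ?U * ?V - ?V * ?U"
  proof -
    have "w i * w j * ((u i - u j) * (v i - v j)) = (w i * u i * v i) * w j + w i * (w j * u j * v j)
        - (w i * u i) * (w j * v j) - (w i * v i) * (w j * u j)" for i j
      by (simp add: algebra_simps)
    then show ?thesis by (simp only: sum_subtractf sum.distrib sum_product)
  qed
  also have "\<dots> = 2 * (?W * ?UV - ?U * ?V)"
    by (simp only: mult.commute[of ?UV] mult.commute[of ?V]) simp
  finally show ?thesis by simp
qed

definition inverse_power_sum :: "nat \<Rightarrow> nat \<Rightarrow> real" where
  "inverse_power_sum p k = (\<Sum>i\<le>k. (1 / real p) ^ i)"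

text \<open>For \<open>w \<ge> 1\<close> this is the largest \<open>k\<close> with \<open>1 + p + \<dots> + p\<^sup>k \<le> w\<close>, i.e. the last index at which
  the geometric resolution below is still \<open>\<ge> 1\<close>.\<close>
definition geometric_length :: "nat \<Rightarrow> nat \<Rightarrow> nat" where
  "geometric_length p w = (LEAST k. w < (\<Sum>i\<le>Suc k. p ^ i))"

definition geometric_head :: "nat \<Rightarrow> nat \<Rightarrow> real" where
  "geometric_head p w = real w / inverse_power_sum p (geometric_length p w)"

definition geometric_resolution :: "nat \<Rightarrow> nat \<Rightarrow> nat \<Rightarrow> real" where
  "geometric_resolution p w i =
     (if i \<le> geometric_length p w then geometric_head p w * (1 / real p) ^ i else 0)"

lemma inverse_power_sum_ge_1: "1 \<le> inverse_power_sum p k"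
  using member_le_sum[of 0 "{..k}" "\<lambda>i. (1 / real p) ^ i"] by (simp add: inverse_power_sum_def)

lemma inverse_power_sum_pos: "0 < inverse_power_sum p k"
  using inverse_power_sum_ge_1[of p k] by simp

lemma inverse_power_sum_split:
  "m \<le> k \<Longrightarrow> inverse_power_sum p k = inverse_power_sum p m + (\<Sum>i\<in>{m<..k}. (1 / real p) ^ i)"
  unfolding inverse_power_sum_def by (subst sum.union_disjoint[symmetric]) (auto intro: sum.cong)

lemma power_mult_inverse_power_sum:
  assumes "0 < p"
  shows "real p ^ k * inverse_power_sum p k = (\<Sum>i\<le>k. real p ^ i)"
proof (induction k)
  case (Suc k)
  have "real p ^ Suc k * inverse_power_sum p (Suc k)
      = real p * (real p ^ k * inverse_power_sum p k) + real p ^ Suc k * (1 / real p) ^ Suc k"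
    by (simp add: inverse_power_sum_def algebra_simps)
  also have "real p ^ Suc k * (1 / real p) ^ Suc k = 1" using assms by (simp add: power_one_over)
  finally show ?case
    using Suc by (simp add: sum.atMost_Suc_shift sum_distrib_left del: sum.atMost_Suc)
qed (simp add: inverse_power_sum_def)

lemma geometric_head_nonneg: "0 \<le> geometric_head p w"
  unfolding geometric_head_def by (intro divide_nonneg_pos inverse_power_sum_pos) simp

lemma geometric_head_mult_inverse_power_sum:
  "geometric_head p w * inverse_power_sum p (geometric_length p w) = real w"
  using inverse_power_sum_pos[of p "geometric_length p w"] by (simp add: geometric_head_def)

context
  fixes p :: nat
  assumes p: "p \<ge> 2"
begin

lemma inverse_power_mult_power: "(1 / real p) ^ i * real p ^ i = 1"
  using p by (simp add: power_one_over)

lemma less_sum_power_geometric_length: "real w < (\<Sum>i\<le>Suc (geometric_length p w). real p ^ i)"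
proof -
  have "w < (\<Sum>i\<le>Suc (geometric_length p w). p ^ i)"
    unfolding geometric_length_def
  proof (rule LeastI[of _ w])
    have "w < 2 ^ w" by (rule less_exp)
    also have "\<dots> \<le> 2 ^ Suc w" by simp
    also have "\<dots> \<le> p ^ Suc w" using p by (intro power_mono) auto
    also have "\<dots> \<le> (\<Sum>i\<le>Suc w. p ^ i)" by (rule member_le_sum) auto
    finally show "w < (\<Sum>i\<le>Suc w. p ^ i)" .
  qed
  then have "real w < real (\<Sum>i\<le>Suc (geometric_length p w). p ^ i)"
    by (simp only: of_nat_less_iff)
  then show ?thesis by simp
qed

lemma sum_power_geometric_length_le:
  assumes "1 \<le> w"
  shows "(\<Sum>i\<le>geometric_length p w. real p ^ i) \<le> real w"
proof (cases "geometric_length p w")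
  case (Suc j)
  then have "\<not> w < (\<Sum>i\<le>Suc j. p ^ i)"
    using not_less_Least[of j "\<lambda>k. w < (\<Sum>i\<le>Suc k. p ^ i)"] by (simp add: geometric_length_def)
  then have "real (\<Sum>i\<le>Suc j. p ^ i) \<le> real w" by (simp only: not_less of_nat_le_iff)
  then show ?thesis using Suc by simp
qed (use assms in simp)

lemma real_resolution_le_geometric:
  assumes "real_resolution p w \<delta>" "m \<le> i"
  shows "\<delta> i \<le> \<delta> m * real p ^ m * (1 / real p) ^ i"
proof -
  have "\<delta> i * real p ^ i \<le> \<delta> m * real p ^ m"
    using real_resolution_scaled_antimono[OF assms] by (simp add: mult.commute)
  moreover have "0 < real p ^ i" using p by simp
  ultimately show ?thesis by (simp add: power_one_over pos_le_divide_eq)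
qed

lemma geometric_le_real_resolution:
  assumes "real_resolution p w \<delta>" "i \<le> m"
  shows "\<delta> m * real p ^ m * (1 / real p) ^ i \<le> \<delta> i"
proof -
  have "\<delta> m * real p ^ m * (1 / real p) ^ i = \<delta> m * real p ^ m / real p ^ i"
    by (simp add: power_one_over)
  also have "\<dots> \<le> \<delta> i * real p ^ i / real p ^ i"
    using real_resolution_scaled_antimono[OF assms] by (intro divide_right_mono) (simp_all add: mult.commute)
  also have "\<dots> = \<delta> i" using p by simp
  finally show ?thesis .
qed

lemma real_resolution_eq_0:
  assumes r: "real_resolution p w \<delta>" and i: "geometric_length p w < i"
  shows "\<delta> i = 0"
proof (rule ccontr)
  assume "\<delta> i \<noteq> 0"
  define K where "K = Suc (geometric_length p w)"
  have "K \<le> i" using i by (simp add: K_def)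
  have "\<delta> K \<noteq> 0"
    using real_resolution_le_geometric[OF r \<open>K \<le> i\<close>] real_resolution_nonneg[OF r, of i] \<open>\<delta> i \<noteq> 0\<close>
    by auto
  then have "1 \<le> \<delta> K" using r unfolding real_resolution_def by auto
  have "(\<Sum>i\<le>K. real p ^ i) = (\<Sum>i\<le>K. 1 * real p ^ K * (1 / real p) ^ i)"
    using power_mult_inverse_power_sum[of p K] p by (simp add: inverse_power_sum_def sum_distrib_left)
  also have "\<dots> \<le> (\<Sum>i\<le>K. \<delta> K * real p ^ K * (1 / real p) ^ i)"
    using \<open>1 \<le> \<delta> K\<close> by (intro sum_mono mult_right_mono) auto
  also have "\<dots> \<le> (\<Sum>i\<le>K. \<delta> i)" by (intro sum_mono geometric_le_real_resolution[OF r]) auto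
  also have "\<dots> \<le> suminf \<delta>"
    using r real_resolution_nonneg[OF r] unfolding real_resolution_def
    by (intro sum_le_suminf) (auto simp: sums_summable)
  also have "\<dots> = real w" using r unfolding real_resolution_def by (simp add: sums_unique[symmetric])
  finally show False using less_sum_power_geometric_length[of w] by (simp add: K_def)
qed

lemma real_resolution_sum_atMost:
  assumes r: "real_resolution p w \<delta>"
  shows "real w = (\<Sum>i\<le>geometric_length p w. \<delta> i)"
proof -
  have "\<delta> sums (\<Sum>i\<le>geometric_length p w. \<delta> i)"
    by (rule sums_finite) (use real_resolution_eq_0[OF r] in auto)
  moreover have "\<delta> sums real w" using r unfolding real_resolution_def by auto
  ultimately show ?thesis using sums_unique2 by blast
qed

lemma geometric_head_le_real_resolution:
  assumes r: "real_resolution p w \<delta>"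
  shows "geometric_head p w \<le> \<delta> 0"
proof -
  have "real w \<le> (\<Sum>i\<le>geometric_length p w. \<delta> 0 * real p ^ 0 * (1 / real p) ^ i)"
    unfolding real_resolution_sum_atMost[OF r] by (intro sum_mono real_resolution_le_geometric[OF r]) auto
  also have "\<dots> = \<delta> 0 * inverse_power_sum p (geometric_length p w)"
    by (simp add: inverse_power_sum_def sum_distrib_left)
  finally show ?thesis
    unfolding geometric_head_def using inverse_power_sum_pos[of p "geometric_length p w"]
    by (simp add: divide_le_eq)
qed

text \<open>A real resolution starting with the geometric head lies termwise below the geometric
  resolution and has the same sum, so it is the geometric resolution.\<close>
lemma real_resolution_eq_geometric:
  assumes r: "real_resolution p w \<delta>" and head: "\<delta> 0 = geometric_head p w"
  shows "\<delta> = geometric_resolution p w"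
proof -
  define k where "k = geometric_length p w"
  have le: "\<delta> i \<le> geometric_head p w * (1 / real p) ^ i" for i
    using real_resolution_le_geometric[OF r, of 0 i] head by simp
  have "(\<Sum>i\<le>k. geometric_head p w * (1 / real p) ^ i - \<delta> i)
      = geometric_head p w * inverse_power_sum p k - real w"
    using real_resolution_sum_atMost[OF r]
    by (simp add: k_def sum_subtractf inverse_power_sum_def sum_distrib_left)
  also have "\<dots> = 0" by (simp add: k_def geometric_head_mult_inverse_power_sum)
  finally have "\<forall>i\<in>{..k}. geometric_head p w * (1 / real p) ^ i - \<delta> i = 0"
    using le by (subst sum_nonneg_eq_0_iff[symmetric]) auto
  then show ?thesis
    using real_resolution_eq_0[OF r] by (auto intro!: ext simp: geometric_resolution_def k_def)
qed

lemma real_resolution_geometric: "real_resolution p w (geometric_resolution p w)"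
proof (cases "w = 0")
  case True
  then have "geometric_resolution p w = (\<lambda>_. 0)"
    by (auto intro!: ext simp: geometric_resolution_def geometric_head_def)
  then show ?thesis using True by (simp add: real_resolution_def)
next
  case False
  define k where "k = geometric_length p w"
  have "real p ^ k * inverse_power_sum p k \<le> real w"
    using power_mult_inverse_power_sum[of p k] sum_power_geometric_length_le[of w] p False
    by (simp add: k_def)
  then have "real p ^ k \<le> geometric_head p w"
    using inverse_power_sum_pos[of p k] by (simp add: geometric_head_def k_def le_divide_eq)
  then have last: "1 \<le> geometric_head p w * (1 / real p) ^ k"
    using p by (simp add: power_one_over field_simps)
  have "geometric_resolution p w i = 0 \<or> 1 \<le> geometric_resolution p w i" for i
  proof (cases "i \<le> k")
    case True
    have "(1 / real p) ^ k \<le> (1 / real p) ^ i" using True p by (intro power_decreasing) auto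
    then have "geometric_head p w * (1 / real p) ^ k \<le> geometric_head p w * (1 / real p) ^ i"
      using geometric_head_nonneg by (intro mult_left_mono) auto
    then show ?thesis using True last by (simp add: geometric_resolution_def k_def)
  qed (simp add: geometric_resolution_def k_def)
  moreover have "real p * geometric_resolution p w (Suc i) \<le> geometric_resolution p w i" for i
    using p geometric_head_nonneg[of p w]
    by (cases "Suc i \<le> k") (auto simp: geometric_resolution_def k_def field_simps)
  moreover have "geometric_resolution p w sums (\<Sum>i\<le>k. geometric_resolution p w i)"
    by (rule sums_finite) (auto simp: geometric_resolution_def k_def)
  moreover have "(\<Sum>i\<le>k. geometric_resolution p w i) = real w"
    using geometric_head_mult_inverse_power_sum[of p w]
    by (simp add: geometric_resolution_def k_def inverse_power_sum_def sum_distrib_left)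
  ultimately show ?thesis unfolding real_resolution_def by auto
qed

lemma gamma_tilde_eq_geometric_resolution: "gamma_tilde p w = geometric_resolution p w"
  unfolding gamma_tilde_def
proof (rule the_equality)
  have lex: "lex_le (geometric_resolution p w) \<delta>" if r: "real_resolution p w \<delta>" for \<delta>
  proof (cases "\<delta> 0 = geometric_head p w")
    case True
    then show ?thesis using real_resolution_eq_geometric[OF r] by (simp add: lex_le_def)
  next
    case False
    then have "geometric_resolution p w 0 < \<delta> 0"
      using geometric_head_le_real_resolution[OF r] by (simp add: geometric_resolution_def)
    then show ?thesis unfolding lex_le_def by (intro disjI2 exI[of _ 0]) simp
  qed
  then show "real_resolution p w (geometric_resolution p w)
      \<and> (\<forall>\<delta>. real_resolution p w \<delta> \<longrightarrow> lex_le (geometric_resolution p w) \<delta>)"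
    using real_resolution_geometric by blast
  fix \<gamma>
  assume \<gamma>: "real_resolution p w \<gamma> \<and> (\<forall>\<delta>. real_resolution p w \<delta> \<longrightarrow> lex_le \<gamma> \<delta>)"
  show "\<gamma> = geometric_resolution p w"
  proof (rule lex_le_antisym)
    show "lex_le \<gamma> (geometric_resolution p w)" using \<gamma> real_resolution_geometric by blast
    show "lex_le (geometric_resolution p w) \<gamma>" using \<gamma> by (intro lex) blast
  qed
qed

text \<open>Since \<open>p\<^sup>i \<delta>\<^sub>i\<close> is nonincreasing, the first \<open>m + 1\<close> terms of \<open>\<delta>\<close> carry at least
  their share of \<open>w\<close> under the geometric weights.\<close>
lemma geometric_head_mult_le_prefix_sum:
  assumes r: "real_resolution p w \<delta>" and m: "m \<le> geometric_length p w"
  shows "geometric_head p w * inverse_power_sum p m \<le> (\<Sum>i\<le>m. \<delta> i)"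
proof -
  define k where "k = geometric_length p w"
  define P T D where "P = (\<Sum>i\<le>m. \<delta> i)" "T = (\<Sum>i\<in>{m<..k}. \<delta> i)"
    "D = (\<Sum>i\<in>{m<..k}. (1 / real p) ^ i)"
  have "m \<le> k" using m by (simp add: k_def)
  then have "{..k} = {..m} \<union> {m<..k}" by auto
  then have PT: "real w = P + T"
    unfolding P_T_D_def using real_resolution_sum_atMost[OF r] k_def
    by (simp only:) (subst sum.union_disjoint, auto)
  have "\<delta> m * real p ^ m * inverse_power_sum p m = (\<Sum>i\<le>m. \<delta> m * real p ^ m * (1 / real p) ^ i)"
    by (simp add: inverse_power_sum_def sum_distrib_left)
  also have "\<dots> \<le> P"
    unfolding P_T_D_def by (intro sum_mono geometric_le_real_resolution[OF r]) auto
  finally have P_ge: "\<delta> m * real p ^ m * inverse_power_sum p m \<le> P" .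
  have "T \<le> (\<Sum>i\<in>{m<..k}. \<delta> m * real p ^ m * (1 / real p) ^ i)"
    unfolding P_T_D_def by (intro sum_mono real_resolution_le_geometric[OF r]) auto
  also have "\<dots> = \<delta> m * real p ^ m * D" by (simp add: P_T_D_def sum_distrib_left)
  finally have T_le: "T \<le> \<delta> m * real p ^ m * D" .
  have "0 \<le> D" unfolding P_T_D_def by (intro sum_nonneg) simp
  have "T * inverse_power_sum p m \<le> \<delta> m * real p ^ m * D * inverse_power_sum p m"
    using T_le inverse_power_sum_pos[of p m] by (intro mult_right_mono) auto
  also have "\<dots> = (\<delta> m * real p ^ m * inverse_power_sum p m) * D" by simp
  also have "\<dots> \<le> P * D" using P_ge \<open>0 \<le> D\<close> by (rule mult_right_mono)
  finally have TD: "T * inverse_power_sum p m \<le> P * D" .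
  have "(geometric_head p w * inverse_power_sum p m) * inverse_power_sum p k
      = (P + T) * inverse_power_sum p m"
    using PT geometric_head_mult_inverse_power_sum[of p w] by (simp add: k_def mult_ac)
  also have "\<dots> \<le> P * inverse_power_sum p k"
    using TD inverse_power_sum_split[OF \<open>m \<le> k\<close>, of p] by (simp add: P_T_D_def algebra_simps)
  finally show ?thesis using inverse_power_sum_pos[of p k] by (simp add: P_T_D_def)
qed

theorem geometric_pairing_le:
  assumes c: "real_resolution p w\<^sub>a c" and d: "real_resolution p w\<^sub>b d"
  shows "(\<Sum>i. real p ^ i * geometric_resolution p w\<^sub>a i * geometric_resolution p w\<^sub>b i)
      \<le> (\<Sum>i. real p ^ i * c i * d i)"
proof -
  define m where "m = min (geometric_length p w\<^sub>a) (geometric_length p w\<^sub>b)"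
  define x\<^sub>a x\<^sub>b where "x\<^sub>a = geometric_head p w\<^sub>a" "x\<^sub>b = geometric_head p w\<^sub>b"
  define W where "W = inverse_power_sum p m"
  have "(\<Sum>i. real p ^ i * geometric_resolution p w\<^sub>a i * geometric_resolution p w\<^sub>b i)
      = (\<Sum>i\<le>m. real p ^ i * geometric_resolution p w\<^sub>a i * geometric_resolution p w\<^sub>b i)"
    by (rule suminf_finite) (auto simp: geometric_resolution_def m_def)
  also have "\<dots> = (\<Sum>i\<le>m. x\<^sub>a * x\<^sub>b * (1 / real p) ^ i * ((1 / real p) ^ i * real p ^ i))"
    by (intro sum.cong) (auto simp: geometric_resolution_def m_def x\<^sub>a_x\<^sub>b_def algebra_simps)
  also have "\<dots> = x\<^sub>a * x\<^sub>b * W"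
    by (simp add: inverse_power_mult_power W_def inverse_power_sum_def sum_distrib_left)
  finally have geometric: "(\<Sum>i. real p ^ i * geometric_resolution p w\<^sub>a i * geometric_resolution p w\<^sub>b i)
      = x\<^sub>a * x\<^sub>b * W" .
  define S where "S = (\<Sum>i\<le>m. real p ^ i * c i * d i)"
  have "summable (\<lambda>i. real p ^ i * c i * d i)"
    by (rule summable_finite[of "{..geometric_length p w\<^sub>a}"]) (auto simp: real_resolution_eq_0[OF c])
  then have S_le: "S \<le> (\<Sum>i. real p ^ i * c i * d i)"
    unfolding S_def using real_resolution_nonneg[OF c] real_resolution_nonneg[OF d]
    by (intro sum_le_suminf) auto
  have scaled: "(1 / real p) ^ i * (real p ^ i * z) = z" for i z
    using inverse_power_mult_power[of i] by (simp add: algebra_simps)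
  have scaled2: "(1 / real p) ^ i * (real p ^ i * c i) * (real p ^ i * d i) = real p ^ i * c i * d i" for i
    using inverse_power_mult_power[of i] by (simp add: algebra_simps)
  have "(\<Sum>i\<le>m. (1 / real p) ^ i * (real p ^ i * c i)) * (\<Sum>i\<le>m. (1 / real p) ^ i * (real p ^ i * d i))
      \<le> (\<Sum>i\<le>m. (1 / real p) ^ i) * (\<Sum>i\<le>m. (1 / real p) ^ i * (real p ^ i * c i) * (real p ^ i * d i))"
    using real_resolution_scaled_antimono[OF c] real_resolution_scaled_antimono[OF d]
    by (intro Chebyshev_sum_weighted) auto
  then have Chebyshev: "(\<Sum>i\<le>m. c i) * (\<Sum>i\<le>m. d i) \<le> W * S"
    unfolding scaled2 unfolding scaled S_def W_def inverse_power_sum_def .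
  have "x\<^sub>a * W \<le> (\<Sum>i\<le>m. c i)"
    unfolding x\<^sub>a_x\<^sub>b_def W_def by (rule geometric_head_mult_le_prefix_sum[OF c]) (simp add: m_def)
  moreover have "x\<^sub>b * W \<le> (\<Sum>i\<le>m. d i)"
    unfolding x\<^sub>a_x\<^sub>b_def W_def by (rule geometric_head_mult_le_prefix_sum[OF d]) (simp add: m_def)
  moreover have "0 \<le> x\<^sub>a * W" "0 \<le> x\<^sub>b * W"
    using geometric_head_nonneg inverse_power_sum_pos[of p m] by (simp_all add: x\<^sub>a_x\<^sub>b_def W_def)
  ultimately have "(x\<^sub>a * W) * (x\<^sub>b * W) \<le> (\<Sum>i\<le>m. c i) * (\<Sum>i\<le>m. d i)"
    by (intro mult_mono) auto
  with Chebyshev have "W * (x\<^sub>a * x\<^sub>b * W) \<le> W * S" by (simp add: algebra_simps)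
  then have "x\<^sub>a * x\<^sub>b * W \<le> S" using inverse_power_sum_pos[of p m] by (simp add: W_def)
  then show ?thesis using geometric S_le by simp
qed

end

theorem mainTheorem6:
  fixes p :: nat and a b :: "nat list \<Rightarrow> nat" and \<omega>a \<omega>b :: nat
  assumes "p \<ge> 2"
    and "integral_weight_function p \<omega>a a"
    and "integral_weight_function p \<omega>b b"
  shows "ennreal (\<Sum>i. real p ^ i * real (gamma_hat p \<omega>a i) * real (gamma_hat p \<omega>b i))
           \<le> tree_inner p a b
       \<and> (\<Sum>i. real p ^ i * gamma_tilde p \<omega>a i * gamma_tilde p \<omega>b i)
           \<le> (\<Sum>i. real p ^ i * real (gamma_hat p \<omega>a i) * real (gamma_hat p \<omega>b i))"
proof
  note gamma_hat = gamma_hat_eq_greedy_resolution[OF assms(1)]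
  have "(\<Sum>i. real p ^ i * real (gamma_hat p \<omega>a i) * real (gamma_hat p \<omega>b i))
      = real (resolution_pairing p \<omega>a \<omega>b)"
    by (simp add: gamma_hat suminf_resolution_pairing)
  with resolution_pairing_le_tree_inner[OF assms]
  show "ennreal (\<Sum>i. real p ^ i * real (gamma_hat p \<omega>a i) * real (gamma_hat p \<omega>b i))
      \<le> tree_inner p a b"
    by (simp add: ennreal_of_nat_eq_real_of_nat)
  have hat_real: "real_resolution p w (\<lambda>i. real (gamma_hat p w i))" for w
    unfolding gamma_hat
    by (rule integral_resolution_real_resolution[OF integral_resolution_greedy[OF assms(1)]])
  show "(\<Sum>i. real p ^ i * gamma_tilde p \<omega>a i * gamma_tilde p \<omega>b i)
      \<le> (\<Sum>i. real p ^ i * real (gamma_hat p \<omega>a i) * real (gamma_hat p \<omega>b i))"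
    unfolding gamma_tilde_eq_geometric_resolution[OF assms(1)]
    by (rule geometric_pairing_le[OF assms(1) hat_real hat_real])
qed

end
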